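(* Consider $N$ agents with dynamics $\dot q_i=v_i$, $M_i(q_i)\dot v_i+C_i(q_i,v_i)v_i+g_i(q_i)=\tau_i$, $i=1,\dots,N$, satisfying the standing assumptions below, and a directed graph with $N$ nodes, $M$ edges and incidence matrix $B$. Let $q_d(t)\in\mathbb{R}^n$ be a smooth reference trajectory. Let $\Pi_i,K_i\in\mathbb{R}^{n\times n}$ be symmetric positive definite, and let $K_\zeta\in\mathbb{R}^{Mn\times Mn}$ be symmetric positive definite. Define $\tilde q_i=q_i-q_d$, $v_{i,r}=\dot q_d-\Pi_i\tilde q_i$, $s_i=v_i-v_{i,r}$, and apply to each agent the control law $$\tau_i=M_i(q_i)\dot v_{i,r}+C_i(q_i,\dot q_i)v_{i,r}+g_i(q_i)-K_is_i-\Pi_i\tilde q_i+u_i .$$ To each edge $k$ attach an artificial spring state $\zeta_k\in\mathbb{R}^n$ with potential $P_\zeta(\zeta)=\tfrac12(\zeta-\zeta_d)^\top K_\zeta(\zeta-\zeta_d)$, where $\zeta=(\zeta_1^\top,\dots,\zeta_M^\top)^\top$ and $\zeta_d\in\mathbb{R}^{Mn}$ is a constant vector of desired relative displacements, with edge dynamics $\dot\zeta=\mu-\frac{\partial P_\zeta}{\partial\zeta}(\zeta)$ and edge output $\frac{\partial P_\zeta}{\partial \zeta}(\zeta)=K_\zeta(\zeta-\zeta_d)$, and interconnect via $\mu=(B^\top\otimes I_n)s$, $u=-(B\otimes I_n)K_\zeta(\zeta-\zeta_d)$, where $s,u$ are the stacked vectors of $s_i,u_i$. The resulting closed-loop system is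 $$\dot{\tilde q}+\Pi\tilde q=s,\quad M(q)\dot s+C(q,\dot q)s+Ks=-\Pi\tilde q-(B\otimes I_n)K_\zeta(\zeta-\zeta_d),\quad \dot\zeta+K_\zeta(\zeta-\zeta_d)=(B^\top\otimes I_n)s,$$ with $\Pi=\mathrm{diag}(\Pi_1,\dots,\Pi_N)$, $K=\mathrm{diag}(K_1,\dots,K_N)$. Then the function $$S(\tilde q,s,\zeta,q)=\tfrac12\tilde q^\top\Pi\tilde q+\tfrac12 s^\top M(q)s+P_\zeta(\zeta)$$ satisfies, along all solutions, $\dot S=-\tilde q^\top\Pi^2\tilde q-s^\top Ks-(\zeta-\zeta_d)^\top K_\zeta^2(\zeta-\zeta_d)$ and $\dot S\le-\beta S$, with $\beta=k_3/k_2$, where $k_2=\max\{\lambda_{\max}(\Pi),\ \sup_q\lambda_{\max}(M(q)),\ \lambda_{\max}(K_\zeta)\}$ and $k_3=\min\{\lambda_{\min}(\Pi^2),\ \lambda_{\min}(K),\ \lambda_{\min}(K_\zeta^2)\}$. Consequently the equilibrium $(\tilde q,s,\zeta)=(0,0,\zeta_d)$ is globally uniformly exponentially stable, with $S(t)\le e^{-\beta t}S(0)$.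
   Context: Standing assumptions: each $q_i\in\mathbb{R}^n$; $M_i(q_i)$ is symmetric positive definite and uniformly bounded, i.e. there exist constants $0<m_1\le m_2$ with $m_1I\le M_i(q_i)\le m_2 I$ for all $q_i$; $g_i(q_i)=\frac{\partial P_i}{\partial q_i}(q_i)$ for a potential function $P_i$; $C_i(q_i,v_i)$ is a matrix satisfying $C_i(q_i,v_i)v_i=\dot M_i(q_i)v_i-\frac{\partial}{\partial q_i}\big(\tfrac12 v_i^\top M_i(q_i)v_i\big)$ and such that $\dot M_i(q_i)-2C_i(q_i,v_i)$ is skew-symmetric for all $q_i,v_i$. Stacked quantities: $q=(q_1^\top,\dots,q_N^\top)^\top$, similarly $v,\tau,s,u$; $M(q)=\mathrm{diag}(M_1(q_1),\dots,M_N(q_N))$, $C(q,v)=\mathrm{diag}(C_1,\dots,C_N)$. The incidence matrix $B\in\mathbb{R}^{N\times M}$ of a directed graph has entries $b_{ik}=-1$ if node $i$ is the tail of edge $k$, $b_{ik}=1$ if node $i$ is the head of edge $k$, and $0$ otherwise. $\otimes$ denotes the Kronecker product; $\lambda_{\min},\lambda_{\max}$ denote minimal/maximal eigenvalues. *)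

theory Defs
  imports "HOL-Analysis.Analysis"
begin

text \<open>Stacked vectors in R^(N n) are indexed by the product type 'N \<times> 'n:
  the entry (i,a) is component a of agent i.  Similarly for edges ('M \<times> 'n).\<close>

definition blk :: "real^('N::finite \<times> 'n::finite) \<Rightarrow> 'N \<Rightarrow> real^'n" where
  "blk x i = (\<chi> a. x $ (i, a))"

definition stk :: "('N::finite \<Rightarrow> real^'n::finite) \<Rightarrow> real^('N \<times> 'n)" where
  "stk f = (\<chi> p. f (fst p) $ snd p)"

definition blockdiag :: "('N::finite \<Rightarrow> real^'n::finite^'n) \<Rightarrow> real^('N \<times> 'n)^('N \<times> 'n)" where
  "blockdiag A = (\<chi> p r. if fst p = fst r then A (fst p) $ snd p $ snd r else 0)"

definition kronI :: "real^'m::finite^'k::finite \<Rightarrow> real^('m \<times> 'n::finite)^('k \<times> 'n)" where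
  "kronI B = (\<chi> p r. if snd p = snd r then B $ fst p $ fst r else 0)"

definition incidence_matrix :: "real^'M::finite^'N::finite \<Rightarrow> bool" where
  "incidence_matrix B \<longleftrightarrow> (\<forall>k. \<exists>tl hd. tl \<noteq> hd \<and> B $ tl $ k = -1 \<and> B $ hd $ k = 1 \<and>
      (\<forall>i. i \<noteq> tl \<and> i \<noteq> hd \<longrightarrow> B $ i $ k = 0))"

definition sym_pos_def :: "real^'n::finite^'n \<Rightarrow> bool" where
  "sym_pos_def A \<longleftrightarrow> transpose A = A \<and> (\<forall>x. x \<noteq> 0 \<longrightarrow> x \<bullet> (A *v x) > 0)"

definition eigenvalues :: "real^'n::finite^'n \<Rightarrow> real set" where
  "eigenvalues A = {l. \<exists>x. x \<noteq> 0 \<and> A *v x = l *\<^sub>R x}"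

definition lambda_max :: "real^'n::finite^'n \<Rightarrow> real" where
  "lambda_max A = Max (eigenvalues A)"

definition lambda_min :: "real^'n::finite^'n \<Rightarrow> real" where
  "lambda_min A = Min (eigenvalues A)"

definition vref :: "('N::finite \<Rightarrow> real^'n::finite^'n) \<Rightarrow> real^'n \<Rightarrow> real^'n \<Rightarrow> real^('N \<times> 'n) \<Rightarrow> real^('N \<times> 'n)" where
  "vref Pim qdt qd't q = stk (\<lambda>i. qd't - Pim i *v (blk q i - qdt))"

definition closed_loop_sol ::
  "('N::finite \<Rightarrow> real^'n::finite \<Rightarrow> real^'n^'n) \<Rightarrow> ('N \<Rightarrow> real^'n \<Rightarrow> real^'n \<Rightarrow> real^'n^'n) \<Rightarrow>
   ('N \<Rightarrow> real^'n \<Rightarrow> real^'n) \<Rightarrow> ('N \<Rightarrow> real^'n^'n) \<Rightarrow> ('N \<Rightarrow> real^'n^'n) \<Rightarrow>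
   real^('M::finite \<times> 'n)^('M \<times> 'n) \<Rightarrow> real^('M \<times> 'n) \<Rightarrow> real^'M^'N \<Rightarrow>
   (real \<Rightarrow> real^'n) \<Rightarrow> (real \<Rightarrow> real^'n) \<Rightarrow> (real \<Rightarrow> real^'n) \<Rightarrow>
   (real \<Rightarrow> real^('N \<times> 'n)) \<Rightarrow> (real \<Rightarrow> real^('N \<times> 'n)) \<Rightarrow> (real \<Rightarrow> real^('M \<times> 'n)) \<Rightarrow> bool" where
  "closed_loop_sol Mi C g Pim K Kz zd B qd qd' qd'' q v z \<longleftrightarrow>
    (\<forall>t\<ge>0.
      let s = v t - vref Pim (qd t) (qd' t) (q t);
          u = - (kronI B *v (Kz *v (z t - zd)));
          mu = transpose (kronI B) *v s
      in (q has_vector_derivative v t) (at t within {0..}) \<and>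
         (z has_vector_derivative (mu - Kz *v (z t - zd))) (at t within {0..}) \<and>
         (\<exists>a. (v has_vector_derivative a) (at t within {0..}) \<and>
           (\<forall>i. let qi = blk (q t) i; vi = blk (v t) i;
                    vr = qd' t - Pim i *v (qi - qd t);
                    vr' = qd'' t - Pim i *v (vi - qd' t);
                    tau = Mi i qi *v vr' + C i qi vi *v vr + g i qi
                          - K i *v blk s i - Pim i *v (qi - qd t) + blk u i
                in Mi i qi *v blk a i + C i qi vi *v vi + g i qi = tau)))"

definition S_fun ::
  "real^('N::finite \<times> 'n::finite)^('N \<times> 'n) \<Rightarrow> real^('N \<times> 'n)^('N \<times> 'n) \<Rightarrow> real^('M::finite \<times> 'n)^('M \<times> 'n) \<Rightarrow>
   real^('M \<times> 'n) \<Rightarrow> real^('N \<times> 'n) \<Rightarrow> real^('N \<times> 'n) \<Rightarrow> real^('M \<times> 'n) \<Rightarrow> real" where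
  "S_fun PiB Mq Kz zd qt s z =
     (1/2) * (qt \<bullet> (PiB *v qt)) + (1/2) * (s \<bullet> (Mq *v s))
     + (1/2) * ((z - zd) \<bullet> (Kz *v (z - zd)))"

end

theory Submission
  imports Defs
begin

text \<open>S is the energy of the agents in the error coordinates (q~, s) plus the energy of the
  springs.  In these coordinates each agent is passive: skew-symmetry of dM - 2 C cancels the
  Coriolis terms, so agent i dissipates |Pi_i q~_i|^2 + s_i' K_i s_i and receives the power
  s_i' u_i.  The interconnection u = -(B \<otimes> I) K_z (z - z_d), mu = (B' \<otimes> I) s is power
  preserving, so this power is exactly what the springs lose, and the derivative of S is minus a
  sum of three positive definite quadratic forms.  Comparing them with the three quadratic forms
  of S through their extreme eigenvalues gives dS/dt \<le> -\<beta> S, hence S(t) \<le> exp(-\<beta> (t - t0)) S(t0);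
  since S is squeezed between two multiples of |(q~, s, z - z_d)|^2, the error decays
  exponentially with rate \<beta>/2.\<close>

section \<open>Spectral bounds for symmetric matrices\<close>

lemma sym_inner_swap:
  fixes A :: "real^'n::finite^'n"
  assumes "transpose A = A"
  shows "x \<bullet> (A *v y) = y \<bullet> (A *v x)"
  by (metis assms dot_lmul_matrix inner_commute vector_transpose_matrix)

lemma sym_inner_mult_self:
  fixes A :: "real^'n::finite^'n"
  assumes "transpose A = A"
  shows "x \<bullet> ((A ** A) *v x) = (A *v x) \<bullet> (A *v x)"
  by (simp add: matrix_vector_mul_assoc[symmetric] sym_inner_swap[OF assms, of x])

lemma matrix_vector_mult_uminus: "(- A) *v x = - (A *v (x :: real^'n::finite))"
  by (simp add: matrix_vector_mult_def vec_eq_iff sum_negf)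

lemma skew_quadratic_eq_0:
  fixes A :: "real^'n::finite^'n"
  assumes "transpose A = - A"
  shows "x \<bullet> (A *v x) = 0"
proof -
  have "x \<bullet> (A *v x) = (transpose A *v x) \<bullet> x" by (simp add: dot_lmul_matrix)
  also have "transpose A *v x = - (A *v x)" by (simp add: assms matrix_vector_mult_uminus)
  finally show ?thesis by (simp add: inner_commute)
qed

lemma nonpos_if_le_mult_all_pos:
  fixes a c :: real
  assumes "\<And>t. t > 0 \<Longrightarrow> a \<le> t * c"
  shows "a \<le> 0"
proof (rule field_le_epsilon)
  fix e :: real assume "e > 0"
  define t where "t = e / (\<bar>c\<bar> + 1)"
  have "\<bar>c\<bar> + 1 > 0" by simp
  then have "t > 0" "t * (\<bar>c\<bar> + 1) = e" using \<open>e > 0\<close> by (simp_all add: t_def)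
  then have t: "t > 0" "t * \<bar>c\<bar> + t = e" by (simp_all add: algebra_simps)
  have "a \<le> t * c" using assms t(1) .
  also have "\<dots> \<le> t * \<bar>c\<bar>" using t(1) by (simp add: mult_left_mono)
  finally show "a \<le> 0 + e" using t by linarith
qed

text \<open>Perturbing a maximiser x of the Rayleigh quotient along the residual w = A x - \<mu> x
  would raise the quotient at first order by 2 t |w|^2.\<close>
lemma rayleigh_maximiser_eigenvector:
  fixes A :: "real^'n::finite^'n"
  assumes sym: "transpose A = A"
    and le: "\<And>y. y \<bullet> (A *v y) \<le> \<mu> * (y \<bullet> y)"
    and eq: "x \<bullet> (A *v x) = \<mu> * (x \<bullet> x)"
  shows "A *v x = \<mu> *\<^sub>R x"
proof -
  define w where "w = A *v x - \<mu> *\<^sub>R x"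
  have "w \<bullet> w \<le> t * ((\<mu> * (w \<bullet> w) - w \<bullet> (A *v w)) / 2)" if "t > 0" for t
  proof -
    have "(x + t *\<^sub>R w) \<bullet> (A *v (x + t *\<^sub>R w)) \<le> \<mu> * ((x + t *\<^sub>R w) \<bullet> (x + t *\<^sub>R w))"
      by (rule le)
    then have "2 * t * (w \<bullet> (A *v x)) + t\<^sup>2 * (w \<bullet> (A *v w)) \<le> 2 * t * \<mu> * (w \<bullet> x) + t\<^sup>2 * \<mu> * (w \<bullet> w)"
      using eq sym_inner_swap[OF sym, of x w]
      by (simp add: power2_eq_square algebra_simps inner_commute)
    moreover have "w \<bullet> (A *v x) = w \<bullet> w + \<mu> * (w \<bullet> x)"
      by (simp add: w_def algebra_simps inner_commute)
    ultimately have "t * (2 * (w \<bullet> w)) \<le> t * (t * (\<mu> * (w \<bullet> w) - w \<bullet> (A *v w)))"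
      by (simp add: power2_eq_square algebra_simps)
    then have "2 * (w \<bullet> w) \<le> t * (\<mu> * (w \<bullet> w) - w \<bullet> (A *v w))"
      using that by (rule mult_left_le_imp_le)
    then show ?thesis by simp
  qed
  then have "w \<bullet> w \<le> 0" by (rule nonpos_if_le_mult_all_pos)
  then have "w = 0" by (metis inner_eq_zero_iff inner_ge_zero order_antisym)
  then show ?thesis by (simp add: w_def)
qed

lemma sym_quadratic_le_eigenvalue:
  fixes A :: "real^'n::finite^'n"
  assumes sym: "transpose A = A"
  shows "\<exists>\<mu>\<in>eigenvalues A. \<forall>y. y \<bullet> (A *v y) \<le> \<mu> * (y \<bullet> y)"
proof -
  let ?f = "\<lambda>x::real^'n. x \<bullet> (A *v x)"
  have "continuous_on (sphere 0 1) ?f"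
    by (intro continuous_intros linear_continuous_on matrix_vector_mul_linear_gen)
  then obtain x where x: "x \<in> sphere 0 1" and max: "\<And>y. y \<in> sphere 0 1 \<Longrightarrow> ?f y \<le> ?f x"
    using continuous_attains_sup[of "sphere 0 1" ?f] by auto
  have le: "?f y \<le> ?f x * (y \<bullet> y)" for y
  proof (cases "y = 0")
    case False
    have "?f ((1 / norm y) *\<^sub>R y) \<le> ?f x" using False by (intro max) simp
    then show ?thesis using False
      by (simp add: matrix_vector_mult_scaleR dot_square_norm field_simps power2_eq_square)
  qed simp
  have "x \<bullet> x = 1" using x by (simp add: dot_square_norm)
  then have "A *v x = ?f x *\<^sub>R x" by (intro rayleigh_maximiser_eigenvector[OF sym le]) simp
  moreover have "x \<noteq> 0" using x by auto
  ultimately show ?thesis using le unfolding eigenvalues_def by blast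
qed

lemma eigenvalues_uminusD:
  assumes "l \<in> eigenvalues (- A)"
  shows "- l \<in> eigenvalues (A :: real^'n::finite^'n)"
proof -
  obtain x where x: "x \<noteq> 0" "- (A *v x) = l *\<^sub>R x"
    using assms unfolding eigenvalues_def matrix_vector_mult_uminus by blast
  then have "A *v x = (- l) *\<^sub>R x" by (metis minus_minus scaleR_minus_left)
  then show ?thesis using x(1) unfolding eigenvalues_def by blast
qed

text \<open>Eigenvectors of a symmetric matrix for distinct eigenvalues are orthogonal, hence
  independent, so there are at most CARD('n) eigenvalues.\<close>
lemma finite_eigenvalues_sym:
  fixes A :: "real^'n::finite^'n"
  assumes sym: "transpose A = A"
  shows "finite (eigenvalues A)"
proof -
  define e where "e l = (SOME x. x \<noteq> 0 \<and> A *v x = l *\<^sub>R x)" for l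
  have e: "e l \<noteq> 0 \<and> A *v e l = l *\<^sub>R e l" if "l \<in> eigenvalues A" for l
    using that someI_ex[of "\<lambda>x. x \<noteq> 0 \<and> A *v x = l *\<^sub>R x"]
    unfolding e_def eigenvalues_def by blast
  have inj: "inj_on e (eigenvalues A)"
  proof (rule inj_onI)
    fix l l' assume "l \<in> eigenvalues A" "l' \<in> eigenvalues A" "e l = e l'"
    then have "l *\<^sub>R e l = l' *\<^sub>R e l" using e by metis
    then show "l = l'" using e \<open>l \<in> eigenvalues A\<close> by simp
  qed
  have "pairwise orthogonal (e ` eigenvalues A)"
  proof (clarsimp simp: pairwise_def)
    fix l l' assume l: "l \<in> eigenvalues A" and l': "l' \<in> eigenvalues A" and "e l \<noteq> e l'"
    have "l * (e l \<bullet> e l') = e l' \<bullet> (A *v e l)" using e[OF l] by (simp add: inner_commute)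
    also have "\<dots> = e l \<bullet> (A *v e l')" by (rule sym_inner_swap[OF sym])
    also have "\<dots> = l' * (e l \<bullet> e l')" using e[OF l'] by simp
    finally have "(l - l') * (e l \<bullet> e l') = 0" by (simp add: algebra_simps)
    moreover have "l \<noteq> l'" using \<open>e l \<noteq> e l'\<close> by auto
    ultimately show "orthogonal (e l) (e l')" by (simp add: orthogonal_def)
  qed
  moreover have "0 \<notin> e ` eigenvalues A" using e by auto
  ultimately have "independent (e ` eigenvalues A)" by (rule pairwise_orthogonal_independent)
  then have "finite (e ` eigenvalues A)" by (rule finiteI_independent)
  then show ?thesis using inj by (rule finite_imageD)
qed

lemma eigenvalue_le_of_quadratic_le:
  fixes A :: "real^'n::finite^'n"
  assumes "l \<in> eigenvalues A" "\<And>x. x \<bullet> (A *v x) \<le> c * (x \<bullet> x)"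
  shows "l \<le> c"
proof -
  obtain x where "x \<noteq> 0" "A *v x = l *\<^sub>R x" using assms(1) unfolding eigenvalues_def by blast
  then show ?thesis using assms(2)[of x] by simp
qed

lemma
  fixes A :: "real^'n::finite^'n"
  assumes sym: "transpose A = A"
  shows lambda_max_in_eigenvalues: "lambda_max A \<in> eigenvalues A"
    and quadratic_le_lambda_max: "x \<bullet> (A *v x) \<le> lambda_max A * (x \<bullet> x)"
proof -
  obtain \<mu> where \<mu>: "\<mu> \<in> eigenvalues A" "\<And>y. y \<bullet> (A *v y) \<le> \<mu> * (y \<bullet> y)"
    using sym_quadratic_le_eigenvalue[OF sym] by blast
  have "lambda_max A = \<mu>" unfolding lambda_max_def
  proof (rule Max_eqI[OF finite_eigenvalues_sym[OF sym] _ \<mu>(1)])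
    show "l \<le> \<mu>" if "l \<in> eigenvalues A" for l using that \<mu>(2) by (rule eigenvalue_le_of_quadratic_le)
  qed
  then show "lambda_max A \<in> eigenvalues A" "x \<bullet> (A *v x) \<le> lambda_max A * (x \<bullet> x)"
    using \<mu> by auto
qed

lemma eigenvalue_ge_of_le_quadratic:
  fixes A :: "real^'n::finite^'n"
  assumes "l \<in> eigenvalues A" "\<And>x. c * (x \<bullet> x) \<le> x \<bullet> (A *v x)"
  shows "c \<le> l"
proof -
  obtain x where "x \<noteq> 0" "A *v x = l *\<^sub>R x" using assms(1) unfolding eigenvalues_def by blast
  then show ?thesis using assms(2)[of x] by simp
qed

lemma
  fixes A :: "real^'n::finite^'n"
  assumes sym: "transpose A = A"
  shows lambda_min_in_eigenvalues: "lambda_min A \<in> eigenvalues A"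
    and lambda_min_le_quadratic: "lambda_min A * (x \<bullet> x) \<le> x \<bullet> (A *v x)"
proof -
  have "transpose (- A) = - A" using sym by (simp add: transpose_def vec_eq_iff)
  then obtain \<nu> where \<nu>: "\<nu> \<in> eigenvalues (- A)" "\<And>y. y \<bullet> ((- A) *v y) \<le> \<nu> * (y \<bullet> y)"
    using sym_quadratic_le_eigenvalue by blast
  have "- \<nu> * (y \<bullet> y) \<le> y \<bullet> (A *v y)" for y
    using \<nu>(2)[of y] by (simp add: matrix_vector_mult_uminus)
  note \<mu> = eigenvalues_uminusD[OF \<nu>(1)] this
  have "lambda_min A = - \<nu>" unfolding lambda_min_def
  proof (rule Min_eqI[OF finite_eigenvalues_sym[OF sym] _ \<mu>(1)])
    show "- \<nu> \<le> l" if "l \<in> eigenvalues A" for l using that \<mu>(2) by (rule eigenvalue_ge_of_le_quadratic)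
  qed
  then show "lambda_min A \<in> eigenvalues A" "lambda_min A * (x \<bullet> x) \<le> x \<bullet> (A *v x)"
    using \<mu> by auto
qed

lemma eigenvalue_pos_if_sym_pos_def:
  assumes "sym_pos_def A" "l \<in> eigenvalues A"
  shows "0 < l"
proof -
  obtain x where x: "x \<noteq> 0" "A *v x = l *\<^sub>R x" using assms(2) unfolding eigenvalues_def by blast
  then have "0 < x \<bullet> (A *v x)" using assms(1) unfolding sym_pos_def_def by blast
  then have "0 < l * (x \<bullet> x)" using x(2) by simp
  then show ?thesis by (metis inner_ge_zero mult_nonpos_nonneg not_less)
qed

lemma lambda_max_le_of_quadratic_le:
  fixes A :: "real^'n::finite^'n"
  assumes "transpose A = A" "\<And>x. x \<bullet> (A *v x) \<le> c * (x \<bullet> x)"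
  shows "lambda_max A \<le> c"
  using eigenvalue_le_of_quadratic_le[OF lambda_max_in_eigenvalues] assms by blast

lemma quadratic_le_of_lambda_max_le:
  fixes A :: "real^'n::finite^'n"
  assumes "transpose A = A" "lambda_max A \<le> c"
  shows "x \<bullet> (A *v x) \<le> c * (x \<bullet> x)"
  using quadratic_le_lambda_max[OF assms(1), of x] mult_right_mono[OF assms(2) inner_ge_zero[of x]]
  by linarith

lemma quadratic_ge_of_le_lambda_min:
  fixes A :: "real^'n::finite^'n"
  assumes "transpose A = A" "c \<le> lambda_min A"
  shows "c * (x \<bullet> x) \<le> x \<bullet> (A *v x)"
  using lambda_min_le_quadratic[OF assms(1), of x] mult_right_mono[OF assms(2) inner_ge_zero[of x]]
  by linarith

lemma sym_pos_def_lambda_pos: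
  assumes "sym_pos_def A"
  shows "0 < lambda_min A" "0 < lambda_max A"
proof -
  have "transpose A = A" using assms by (simp add: sym_pos_def_def)
  then show "0 < lambda_min A" "0 < lambda_max A"
    using eigenvalue_pos_if_sym_pos_def[OF assms] lambda_min_in_eigenvalues lambda_max_in_eigenvalues
    by blast+
qed

section \<open>Block vectors and block-diagonal matrices\<close>

lemma blk_stk [simp]: "blk (stk f) i = f i"
  by (simp add: blk_def stk_def vec_eq_iff)

lemma blk_eq_iff: "x = y \<longleftrightarrow> (\<forall>i. blk x i = blk y i)"
  by (auto simp: blk_def vec_eq_iff)

lemma blk_zero [simp]: "blk 0 i = 0"
  and blk_diff [simp]: "blk (x - y) i = blk x i - blk y i"
  and blk_minus [simp]: "blk (- x) i = - blk x i"
  by (simp_all add: blk_def vec_eq_iff)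

lemma bounded_linear_blk: "bounded_linear (\<lambda>x::real^('N::finite \<times> 'n::finite). blk x i)"
  by (auto intro!: linearI simp: linear_conv_bounded_linear[symmetric] blk_def vec_eq_iff)

lemma inner_blk: "x \<bullet> y = (\<Sum>i\<in>UNIV. blk x i \<bullet> blk y i)"
  for x y :: "real^('N::finite \<times> 'n::finite)"
proof -
  have "x \<bullet> y = (\<Sum>p\<in>UNIV \<times> UNIV. x $ p * y $ p)" by (simp add: inner_vec_def)
  then show ?thesis by (simp add: inner_vec_def blk_def sum.cartesian_product case_prod_unfold)
qed

lemma blk_blockdiag_mult [simp]: "blk (blockdiag A *v x) i = A i *v blk x i"
proof -
  have "(blockdiag A *v x) $ (i, a) = (\<Sum>(j, b)\<in>UNIV \<times> UNIV. blockdiag A $ (i, a) $ (j, b) * x $ (j, b))" for a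
    by (simp add: matrix_vector_mult_def case_prod_unfold)
  also have "\<dots> a = (\<Sum>j\<in>UNIV. if j = i then (A i *v blk x i) $ a else 0)" for a
    unfolding sum.cartesian_product[symmetric]
    by (intro sum.cong) (auto simp: blockdiag_def matrix_vector_mult_def blk_def)
  finally show ?thesis by (simp add: blk_def vec_eq_iff)
qed

lemma transpose_blockdiag: "transpose (blockdiag A) = blockdiag (\<lambda>i. transpose (A i))"
  by (simp add: transpose_def blockdiag_def vec_eq_iff)

lemma quadratic_blockdiag: "x \<bullet> (blockdiag A *v x) = (\<Sum>i\<in>UNIV. blk x i \<bullet> (A i *v blk x i))"
  by (simp add: inner_blk[of x])

lemma blockdiag_quadratic_le:
  assumes "\<And>i w. w \<bullet> (A i *v w) \<le> c * (w \<bullet> w)"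
  shows "x \<bullet> (blockdiag A *v x) \<le> c * (x \<bullet> x)"
  unfolding quadratic_blockdiag inner_blk[of x x] sum_distrib_left by (rule sum_mono) (rule assms)

lemma blockdiag_quadratic_ge:
  assumes "\<And>i w. c * (w \<bullet> w) \<le> w \<bullet> (A i *v w)"
  shows "c * (x \<bullet> x) \<le> x \<bullet> (blockdiag A *v x)"
  unfolding quadratic_blockdiag inner_blk[of x x] sum_distrib_left by (rule sum_mono) (rule assms)

lemma sym_pos_def_blockdiag:
  assumes "\<And>i. sym_pos_def (A i)"
  shows "sym_pos_def (blockdiag A)"
  unfolding sym_pos_def_def
proof (intro conjI allI impI)
  show "transpose (blockdiag A) = blockdiag A"
    using assms by (simp add: transpose_blockdiag sym_pos_def_def)
  fix x :: "real^('a \<times> 'b)" assume "x \<noteq> 0"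
  then obtain i where i: "blk x i \<noteq> 0" by (metis blk_eq_iff blk_zero)
  have pos: "0 < blk x j \<bullet> (A j *v blk x j)" if "blk x j \<noteq> 0" for j
    using assms[of j] that unfolding sym_pos_def_def by blast
  then have nonneg: "0 \<le> blk x j \<bullet> (A j *v blk x j)" for j
    by (cases "blk x j = 0") (simp_all add: less_imp_le)
  show "0 < x \<bullet> (blockdiag A *v x)"
    unfolding quadratic_blockdiag using sum_pos2[of UNIV i "\<lambda>j. blk x j \<bullet> (A j *v blk x j)"] pos[OF i] nonneg by simp
qed

lemma sym_pos_def_mult_self:
  assumes "sym_pos_def A"
  shows "sym_pos_def (A ** A)"
  unfolding sym_pos_def_def
proof (intro conjI allI impI)
  have sym: "transpose A = A" using assms by (simp add: sym_pos_def_def)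
  then show "transpose (A ** A) = A ** A" by (simp add: matrix_transpose_mul)
  fix x :: "real^'a" assume "x \<noteq> 0"
  then have "A *v x \<noteq> 0" using assms unfolding sym_pos_def_def by (metis inner_zero_right less_irrefl)
  then show "0 < x \<bullet> ((A ** A) *v x)" by (simp add: sym_inner_mult_self[OF sym])
qed

section \<open>Energy balance of the closed loop\<close>

lemma bounded_bilinear_matrix_vector_mult:
  "bounded_bilinear (\<lambda>(A::real^'n::finite^'m::finite) (x::real^'n). A *v x)"
proof -
  have "bilinear (\<lambda>(A::real^'n^'m) (x::real^'n). A *v x)"
    unfolding bilinear_def
    by (auto intro!: linearI simp: matrix_vector_mult_def vec_eq_iff sum_distrib_left sum.distrib
        algebra_simps)
  then show ?thesis by (simp add: bilinear_conv_bounded_bilinear)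
qed

lemma has_real_derivative_quadratic_form:
  fixes F :: "real \<Rightarrow> real^'n::finite^'n" and w :: "real \<Rightarrow> real^'n"
  assumes "(w has_vector_derivative w') (at t within T)"
    and "(F has_vector_derivative F') (at t within T)"
  shows "((\<lambda>\<tau>. w \<tau> \<bullet> (F \<tau> *v w \<tau>)) has_real_derivative
          w t \<bullet> (F t *v w' + F' *v w t) + w' \<bullet> (F t *v w t)) (at t within T)"
proof -
  have "((\<lambda>\<tau>. F \<tau> *v w \<tau>) has_vector_derivative F t *v w' + F' *v w t) (at t within T)"
    using bounded_bilinear.has_vector_derivative[OF bounded_bilinear_matrix_vector_mult assms(2,1)]
    by simp
  from bounded_bilinear.has_vector_derivative[OF bounded_bilinear_inner assms(1) this]
  show ?thesis by (simp add: has_real_derivative_iff_has_vector_derivative)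
qed

text \<open>Passivity of one agent in the error coordinates Q = q - q_d and s = v - v_r:
  skew-symmetry of dM - 2 C removes the Coriolis term from the energy balance.\<close>
lemma error_storage_derivative:
  fixes Q s :: "real \<Rightarrow> real^'n::finite" and Mt :: "real \<Rightarrow> real^'n^'n"
  assumes dQ: "(Q has_vector_derivative s t - P *v Q t) (at t within T)"
    and ds: "(s has_vector_derivative s') (at t within T)"
    and dM: "(Mt has_vector_derivative Dm) (at t within T)"
    and P_sym: "transpose P = P"
    and M_sym: "transpose (Mt t) = Mt t"
    and skew: "transpose (Dm - 2 *\<^sub>R Cm) = - (Dm - 2 *\<^sub>R Cm)"
    and dyn: "Mt t *v s' + Cm *v s t + K *v s t = - (P *v Q t) + u"
  shows "((\<lambda>\<tau>. (1/2) * (Q \<tau> \<bullet> (P *v Q \<tau>)) + (1/2) * (s \<tau> \<bullet> (Mt \<tau> *v s \<tau>))) has_real_derivative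
          - ((P *v Q t) \<bullet> (P *v Q t)) - s t \<bullet> (K *v s t) + s t \<bullet> u) (at t within T)"
proof -
  have "(s t - P *v Q t) \<bullet> (P *v Q t) = s t \<bullet> (P *v Q t) - (P *v Q t) \<bullet> (P *v Q t)"
    and "Q t \<bullet> (P *v (s t - P *v Q t)) = s t \<bullet> (P *v Q t) - (P *v Q t) \<bullet> (P *v Q t)"
    using sym_inner_swap[OF P_sym, of "Q t"]
    by (simp_all add: inner_diff_left inner_diff_right matrix_vector_mult_diff_distrib inner_commute)
  moreover have "s' \<bullet> (Mt t *v s t) = s t \<bullet> (Mt t *v s')"
    by (rule sym_inner_swap[OF M_sym])
  moreover have "s t \<bullet> (Dm *v s t) = 2 * (s t \<bullet> (Cm *v s t))"
    using skew_quadratic_eq_0[OF skew, of "s t"]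
    by (simp add: matrix_vector_mult_diff_rdistrib inner_diff_right scaleR_matrix_vector_assoc[symmetric])
  moreover have "s t \<bullet> (Mt t *v s') + s t \<bullet> (Cm *v s t) + s t \<bullet> (K *v s t) = - (s t \<bullet> (P *v Q t)) + s t \<bullet> u"
    using arg_cong[OF dyn, of "inner (s t)"] by (simp only: inner_add_right inner_minus_right)
  ultimately show ?thesis
    by (intro DERIV_cong[OF DERIV_add[OF
          DERIV_cmult[OF has_real_derivative_quadratic_form[OF dQ has_vector_derivative_const[of P]]]
          DERIV_cmult[OF has_real_derivative_quadratic_form[OF ds dM]]]])
      (simp only: inner_add_right matrix_vector_mult_0 add_0_right, simp add: field_simps)
qed

lemma agent_storage_derivative:
  fixes M :: "real^'n::finite \<Rightarrow> real^'n^'n" and qi vi qd qd' qd'' :: "real \<Rightarrow> real^'n"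
  assumes M_sym: "\<And>x. transpose (M x) = M x"
    and M_deriv: "\<And>x. (M has_derivative DM x) (at x)"
    and C_skew: "\<And>x w. transpose (DM x w - 2 *\<^sub>R C x w) = - (DM x w - 2 *\<^sub>R C x w)"
    and P_sym: "transpose P = P"
    and dqd: "(qd has_vector_derivative qd' t) (at t within T)"
    and dqd': "(qd' has_vector_derivative qd'' t) (at t within T)"
    and dq: "(qi has_vector_derivative vi t) (at t within T)"
    and dv: "(vi has_vector_derivative a) (at t within T)"
    and law: "M (qi t) *v a + C (qi t) (vi t) *v vi t + gi =
      M (qi t) *v (qd'' t - P *v (vi t - qd' t)) + C (qi t) (vi t) *v (qd' t - P *v (qi t - qd t)) + gi
      - K *v (vi t - (qd' t - P *v (qi t - qd t))) - P *v (qi t - qd t) + u"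
  shows "((\<lambda>\<tau>. (1/2) * ((qi \<tau> - qd \<tau>) \<bullet> (P *v (qi \<tau> - qd \<tau>)))
      + (1/2) * ((vi \<tau> - (qd' \<tau> - P *v (qi \<tau> - qd \<tau>))) \<bullet> (M (qi \<tau>) *v (vi \<tau> - (qd' \<tau> - P *v (qi \<tau> - qd \<tau>))))))
    has_real_derivative
      - ((P *v (qi t - qd t)) \<bullet> (P *v (qi t - qd t)))
      - (vi t - (qd' t - P *v (qi t - qd t))) \<bullet> (K *v (vi t - (qd' t - P *v (qi t - qd t))))
      + (vi t - (qd' t - P *v (qi t - qd t))) \<bullet> u) (at t within T)"
proof (rule error_storage_derivative[OF _ _ _ P_sym M_sym C_skew])
  define vr' where "vr' = qd'' t - P *v (vi t - qd' t)"
  have dQ: "((\<lambda>\<tau>. qi \<tau> - qd \<tau>) has_vector_derivative vi t - qd' t) (at t within T)"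
    by (rule has_vector_derivative_diff[OF dq dqd])
  then show "((\<lambda>\<tau>. qi \<tau> - qd \<tau>) has_vector_derivative
      vi t - (qd' t - P *v (qi t - qd t)) - P *v (qi t - qd t)) (at t within T)"
    by simp
  have "((\<lambda>\<tau>. qd' \<tau> - P *v (qi \<tau> - qd \<tau>)) has_vector_derivative vr') (at t within T)"
    unfolding vr'_def
    by (intro has_vector_derivative_diff dqd' bounded_linear.has_vector_derivative[OF
        matrix_vector_mul_bounded_linear dQ])
  then show "((\<lambda>\<tau>. vi \<tau> - (qd' \<tau> - P *v (qi \<tau> - qd \<tau>))) has_vector_derivative a - vr') (at t within T)"
    by (rule has_vector_derivative_diff[OF dv])
  show "((\<lambda>\<tau>. M (qi \<tau>)) has_vector_derivative DM (qi t) (vi t)) (at t within T)"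
    using vector_derivative_diff_chain_within[OF dq has_derivative_at_withinI[OF M_deriv]]
    by (simp add: o_def)
  show "M (qi t) *v (a - vr') + C (qi t) (vi t) *v (vi t - (qd' t - P *v (qi t - qd t)))
      + K *v (vi t - (qd' t - P *v (qi t - qd t))) = - (P *v (qi t - qd t)) + u"
    using law unfolding vr'_def by (simp add: algebra_simps)
qed

lemma spring_storage_derivative:
  fixes Kz :: "real^'m::finite^'m" and Bk :: "real^'m^'k::finite" and z :: "real \<Rightarrow> real^'m"
  assumes Kz_sym: "transpose Kz = Kz"
    and dz: "(z has_vector_derivative transpose Bk *v s - Kz *v (z t - zd)) (at t within T)"
  shows "((\<lambda>\<tau>. (1/2) * ((z \<tau> - zd) \<bullet> (Kz *v (z \<tau> - zd)))) has_real_derivative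
      (Bk *v (Kz *v (z t - zd))) \<bullet> s - (z t - zd) \<bullet> ((Kz ** Kz) *v (z t - zd))) (at t within T)"
proof -
  define e where "e = z t - zd"
  define e' where "e' = transpose Bk *v s - Kz *v e"
  have "((\<lambda>\<tau>. z \<tau> - zd) has_vector_derivative e') (at t within T)"
    using has_vector_derivative_diff[OF dz has_vector_derivative_const] by (simp add: e'_def e_def)
  from DERIV_cmult[OF has_real_derivative_quadratic_form[OF this has_vector_derivative_const[of Kz]], of "1/2"]
  have "((\<lambda>\<tau>. (1/2) * ((z \<tau> - zd) \<bullet> (Kz *v (z \<tau> - zd)))) has_real_derivative e \<bullet> (Kz *v e'))
      (at t within T)"
    using sym_inner_swap[OF Kz_sym, of e' e] by (simp add: e_def)
  moreover have "e \<bullet> (Kz *v (transpose Bk *v s)) = (Bk *v (Kz *v e)) \<bullet> s"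
    using sym_inner_swap[OF Kz_sym, of e] dot_lmul_matrix[of s Bk "Kz *v e"]
    by (simp add: inner_commute)
  moreover have "e \<bullet> (Kz *v (Kz *v e)) = e \<bullet> ((Kz ** Kz) *v e)"
    by (simp add: matrix_vector_mul_assoc)
  ultimately show ?thesis
    by (simp add: e'_def e_def matrix_vector_mult_diff_distrib inner_diff_right)
qed

text \<open>The interconnection u = - w, \<mu> = transpose B s is power preserving: the power - s \<bullet> w
  injected into the agents is exactly compensated by the power w \<bullet> s delivered to the springs.\<close>
lemma agent_rates_sum_power_preserving:
  assumes Pi_sym: "\<And>i. transpose (Pim i) = Pim i"
  shows "(\<Sum>i\<in>UNIV. - ((Pim i *v blk x i) \<bullet> (Pim i *v blk x i)) - blk s i \<bullet> (K i *v blk s i)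
            + blk s i \<bullet> blk (- w) i) + w \<bullet> s
    = - (x \<bullet> ((blockdiag Pim ** blockdiag Pim) *v x)) - s \<bullet> (blockdiag K *v s)"
proof -
  have "transpose (blockdiag Pim) = blockdiag Pim" using Pi_sym by (simp add: transpose_blockdiag)
  then have "x \<bullet> ((blockdiag Pim ** blockdiag Pim) *v x) = (\<Sum>i\<in>UNIV. (Pim i *v blk x i) \<bullet> (Pim i *v blk x i))"
    by (simp add: sym_inner_mult_self inner_blk[of "blockdiag Pim *v x"])
  then show ?thesis
    by (simp add: quadratic_blockdiag sum.distrib sum_subtractf sum_negf inner_blk[of s w, symmetric]
        inner_commute)
qed

lemma S_fun_blockdiag:
  "S_fun (blockdiag Pim) (blockdiag Mq) Kz zd x s z =
    (\<Sum>i\<in>UNIV. (1/2) * (blk x i \<bullet> (Pim i *v blk x i)) + (1/2) * (blk s i \<bullet> (Mq i *v blk s i)))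
    + (1/2) * ((z - zd) \<bullet> (Kz *v (z - zd)))"
  by (simp add: S_fun_def quadratic_blockdiag sum.distrib sum_distrib_left)

lemma blk_vref [simp]: "blk (vref Pim qdt qd't q) i = qd't - Pim i *v (blk q i - qdt)"
  by (simp add: vref_def)

lemma closed_loop_storage_derivative:
  fixes Mi :: "'N::finite \<Rightarrow> real^'n::finite \<Rightarrow> real^'n^'n"
    and Kz :: "real^('M::finite \<times> 'n)^('M \<times> 'n)" and B :: "real^'M^'N"
  assumes M_sym: "\<And>i x. transpose (Mi i x) = Mi i x"
    and M_deriv: "\<And>i x. (Mi i has_derivative DM i x) (at x)"
    and C_skew: "\<And>i x w. transpose (DM i x w - 2 *\<^sub>R C i x w) = - (DM i x w - 2 *\<^sub>R C i x w)"
    and Pi_sym: "\<And>i. transpose (Pim i) = Pim i"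
    and Kz_sym: "transpose Kz = Kz"
    and qd_d1: "\<And>t. (qd has_vector_derivative qd' t) (at t)"
    and qd_d2: "\<And>t. (qd' has_vector_derivative qd'' t) (at t)"
    and sol: "closed_loop_sol Mi C g Pim K Kz zd B qd qd' qd'' q v z"
    and "0 \<le> t"
  shows "((\<lambda>\<tau>. S_fun (blockdiag Pim) (blockdiag (\<lambda>i. Mi i (blk (q \<tau>) i))) Kz zd (q \<tau> - stk (\<lambda>i. qd \<tau>))
              (v \<tau> - vref Pim (qd \<tau>) (qd' \<tau>) (q \<tau>)) (z \<tau>))
    has_real_derivative
      - ((q t - stk (\<lambda>i. qd t)) \<bullet> ((blockdiag Pim ** blockdiag Pim) *v (q t - stk (\<lambda>i. qd t))))
      - (v t - vref Pim (qd t) (qd' t) (q t)) \<bullet> (blockdiag K *v (v t - vref Pim (qd t) (qd' t) (q t)))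
      - (z t - zd) \<bullet> ((Kz ** Kz) *v (z t - zd))) (at t within {0..})"
proof -
  define w where "w = kronI B *v (Kz *v (z t - zd))"
  obtain a where dq: "(q has_vector_derivative v t) (at t within {0..})"
    and dz: "(z has_vector_derivative transpose (kronI B) *v (v t - vref Pim (qd t) (qd' t) (q t))
              - Kz *v (z t - zd)) (at t within {0..})"
    and dv: "(v has_vector_derivative a) (at t within {0..})"
    and law: "\<And>i. Mi i (blk (q t) i) *v blk a i + C i (blk (q t) i) (blk (v t) i) *v blk (v t) i + g i (blk (q t) i) =
        Mi i (blk (q t) i) *v (qd'' t - Pim i *v (blk (v t) i - qd' t))
        + C i (blk (q t) i) (blk (v t) i) *v (qd' t - Pim i *v (blk (q t) i - qd t)) + g i (blk (q t) i)
        - K i *v (blk (v t) i - (qd' t - Pim i *v (blk (q t) i - qd t)))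
        - Pim i *v (blk (q t) i - qd t) + blk (- w) i"
    using sol \<open>0 \<le> t\<close> unfolding closed_loop_sol_def Let_def w_def blk_diff blk_vref by blast
  define e where "e i \<tau> = blk (q \<tau>) i - qd \<tau>" for i \<tau>
  define r where "r i \<tau> = blk (v \<tau>) i - (qd' \<tau> - Pim i *v e i \<tau>)" for i \<tau>
  have blk_e: "blk (q \<tau> - stk (\<lambda>i. qd \<tau>)) i = e i \<tau>"
    and blk_r: "blk (v \<tau> - vref Pim (qd \<tau>) (qd' \<tau>) (q \<tau>)) i = r i \<tau>" for i \<tau>
    by (simp_all add: e_def r_def)
  have "((\<lambda>\<tau>. (1/2) * (e i \<tau> \<bullet> (Pim i *v e i \<tau>)) + (1/2) * (r i \<tau> \<bullet> (Mi i (blk (q \<tau>) i) *v r i \<tau>)))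
    has_real_derivative - ((Pim i *v e i t) \<bullet> (Pim i *v e i t)) - r i t \<bullet> (K i *v r i t) + r i t \<bullet> blk (- w) i)
    (at t within {0..})" for i
    unfolding e_def r_def
    by (rule agent_storage_derivative[where M="Mi i" and DM="DM i" and C="C i" and qd=qd and qd'=qd'
          and qd''=qd'' and t=t and qi="\<lambda>\<tau>. blk (q \<tau>) i" and vi="\<lambda>\<tau>. blk (v \<tau>) i",
          OF M_sym[of i] M_deriv[of i] C_skew[of i] Pi_sym[of i]
          has_vector_derivative_at_within[OF qd_d1] has_vector_derivative_at_within[OF qd_d2]
          bounded_linear.has_vector_derivative[OF bounded_linear_blk[of i] dq]
          bounded_linear.has_vector_derivative[OF bounded_linear_blk[of i] dv] law[of i]])
  then have "((\<lambda>\<tau>. (\<Sum>i\<in>UNIV. (1/2) * (e i \<tau> \<bullet> (Pim i *v e i \<tau>))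
        + (1/2) * (r i \<tau> \<bullet> (Mi i (blk (q \<tau>) i) *v r i \<tau>))) + (1/2) * ((z \<tau> - zd) \<bullet> (Kz *v (z \<tau> - zd))))
    has_real_derivative
      (\<Sum>i\<in>UNIV. - ((Pim i *v e i t) \<bullet> (Pim i *v e i t)) - r i t \<bullet> (K i *v r i t) + r i t \<bullet> blk (- w) i)
      + (w \<bullet> (v t - vref Pim (qd t) (qd' t) (q t)) - (z t - zd) \<bullet> ((Kz ** Kz) *v (z t - zd))))
    (at t within {0..})"
    by (rule DERIV_add[OF DERIV_sum spring_storage_derivative[OF Kz_sym dz, folded w_def]])
  then show ?thesis
    unfolding S_fun_blockdiag blk_e blk_r
    by (rule DERIV_cong)
      (use agent_rates_sum_power_preserving[where Pim=Pim and x="q t - stk (\<lambda>i. qd t)"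
        and s="v t - vref Pim (qd t) (qd' t) (q t)" and K=K and w=w, OF Pi_sym, unfolded blk_e blk_r]
        in linarith)
qed

section \<open>The decay rate\<close>

definition storage_gain ::
  "('N::finite \<Rightarrow> real^'n::finite^'n) \<Rightarrow> ('N \<Rightarrow> real^'n \<Rightarrow> real^'n^'n) \<Rightarrow> real^('M::finite \<times> 'n)^('M \<times> 'n) \<Rightarrow> real"
  where "storage_gain Pim Mi Kz = max (lambda_max (blockdiag Pim))
    (max (Sup (range (\<lambda>x. lambda_max (blockdiag (\<lambda>i. Mi i (blk x i)))))) (lambda_max Kz))"

definition dissipation_gain ::
  "('N::finite \<Rightarrow> real^'n::finite^'n) \<Rightarrow> ('N \<Rightarrow> real^'n^'n) \<Rightarrow> real^('M::finite \<times> 'n)^('M \<times> 'n) \<Rightarrow> real"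
  where "dissipation_gain Pim K Kz = min (lambda_min (blockdiag Pim ** blockdiag Pim))
    (min (lambda_min (blockdiag K)) (lambda_min (Kz ** Kz)))"

lemma storage_gain_pos:
  assumes "\<And>i. sym_pos_def (Pim i)"
  shows "0 < storage_gain Pim Mi Kz"
  using sym_pos_def_lambda_pos(2)[OF sym_pos_def_blockdiag[where A=Pim, OF assms]]
  unfolding storage_gain_def by linarith

lemma dissipation_gain_pos:
  assumes "\<And>i. sym_pos_def (Pim i)" "\<And>i. sym_pos_def (K i)" "sym_pos_def Kz"
  shows "0 < dissipation_gain Pim K Kz"
  using assms unfolding dissipation_gain_def
  by (simp add: sym_pos_def_lambda_pos sym_pos_def_mult_self sym_pos_def_blockdiag)

lemma S_fun_le_storage_gain:
  assumes Pi_pd: "\<And>i. sym_pos_def (Pim i)" and Kz_pd: "sym_pos_def Kz"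
    and M_sym: "\<And>i x. transpose (Mi i x) = Mi i x"
    and M_upper: "\<And>i x w. w \<bullet> (Mi i x *v w) \<le> m2 * (w \<bullet> w)"
  shows "S_fun (blockdiag Pim) (blockdiag (\<lambda>i. Mi i (blk x i))) Kz zd a b z
    \<le> storage_gain Pim Mi Kz / 2 * (a \<bullet> a + b \<bullet> b + (z - zd) \<bullet> (z - zd))"
proof -
  let ?k2 = "storage_gain Pim Mi Kz"
  have M_sym': "transpose (blockdiag (\<lambda>i. Mi i (blk y i))) = blockdiag (\<lambda>i. Mi i (blk y i))" for y
    using M_sym by (simp add: transpose_blockdiag)
  have "lambda_max (blockdiag (\<lambda>i. Mi i (blk y i))) \<le> m2" for y
    by (intro lambda_max_le_of_quadratic_le[OF M_sym'] blockdiag_quadratic_le M_upper)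
  then have "lambda_max (blockdiag (\<lambda>i. Mi i (blk x i)))
      \<le> Sup (range (\<lambda>y. lambda_max (blockdiag (\<lambda>i. Mi i (blk y i)))))"
    by (intro cSup_upper bdd_aboveI[where M=m2]) auto
  then have "b \<bullet> (blockdiag (\<lambda>i. Mi i (blk x i)) *v b) \<le> ?k2 * (b \<bullet> b)"
    by (intro quadratic_le_of_lambda_max_le[OF M_sym']) (simp add: storage_gain_def)
  moreover have "a \<bullet> (blockdiag Pim *v a) \<le> ?k2 * (a \<bullet> a)"
    using Pi_pd by (intro quadratic_le_of_lambda_max_le)
      (auto simp: storage_gain_def transpose_blockdiag sym_pos_def_def)
  moreover have "(z - zd) \<bullet> (Kz *v (z - zd)) \<le> ?k2 * ((z - zd) \<bullet> (z - zd))"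
    using Kz_pd by (intro quadratic_le_of_lambda_max_le) (auto simp: storage_gain_def sym_pos_def_def)
  ultimately show ?thesis
    unfolding S_fun_def ring_distribs(1)[of "?k2 / 2"] by linarith
qed

lemma dissipation_gain_le:
  assumes "\<And>i. sym_pos_def (Pim i)" "\<And>i. sym_pos_def (K i)" "sym_pos_def Kz"
  shows "dissipation_gain Pim K Kz * (a \<bullet> a + b \<bullet> b + e \<bullet> e)
    \<le> a \<bullet> ((blockdiag Pim ** blockdiag Pim) *v a) + b \<bullet> (blockdiag K *v b) + e \<bullet> ((Kz ** Kz) *v e)"
proof -
  let ?k3 = "dissipation_gain Pim K Kz"
  have "sym_pos_def (blockdiag Pim ** blockdiag Pim)" "sym_pos_def (blockdiag K)" "sym_pos_def (Kz ** Kz)"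
    using assms by (simp_all add: sym_pos_def_mult_self sym_pos_def_blockdiag)
  then have "?k3 * (a \<bullet> a) \<le> a \<bullet> ((blockdiag Pim ** blockdiag Pim) *v a)"
    and "?k3 * (b \<bullet> b) \<le> b \<bullet> (blockdiag K *v b)"
    and "?k3 * (e \<bullet> e) \<le> e \<bullet> ((Kz ** Kz) *v e)"
    by (auto intro!: quadratic_ge_of_le_lambda_min simp: sym_pos_def_def dissipation_gain_def)
  then show ?thesis by (simp add: distrib_left)
qed

lemma S_fun_quadratic_lower_bound:
  assumes Pi_pd: "\<And>i. sym_pos_def (Pim i)" and Kz_pd: "sym_pos_def Kz"
    and M_lower: "\<And>i x w. m1 * (w \<bullet> w) \<le> w \<bullet> (Mi i x *v w)" and "0 < m1"
  shows "\<exists>k1>0. \<forall>x a b z. k1 * (a \<bullet> a + b \<bullet> b + (z - zd) \<bullet> (z - zd))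
    \<le> S_fun (blockdiag Pim) (blockdiag (\<lambda>i. Mi i (blk x i))) Kz zd a b z"
proof -
  define k where "k = min (lambda_min (blockdiag Pim)) (min m1 (lambda_min Kz))"
  have Pi_pd': "sym_pos_def (blockdiag Pim)" by (rule sym_pos_def_blockdiag[where A=Pim, OF Pi_pd])
  have "0 < k / 2"
    using sym_pos_def_lambda_pos(1)[OF Pi_pd'] sym_pos_def_lambda_pos(1)[OF Kz_pd] \<open>0 < m1\<close>
    by (simp add: k_def)
  moreover have "k / 2 * (a \<bullet> a + b \<bullet> b + (z - zd) \<bullet> (z - zd))
    \<le> S_fun (blockdiag Pim) (blockdiag (\<lambda>i. Mi i (blk x i))) Kz zd a b z" for x a b z
  proof -
    have "k * (a \<bullet> a) \<le> a \<bullet> (blockdiag Pim *v a)"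
      using Pi_pd' by (intro quadratic_ge_of_le_lambda_min) (auto simp: sym_pos_def_def k_def)
    moreover have "k * ((z - zd) \<bullet> (z - zd)) \<le> (z - zd) \<bullet> (Kz *v (z - zd))"
      using Kz_pd by (intro quadratic_ge_of_le_lambda_min) (auto simp: sym_pos_def_def k_def)
    moreover have "k * (b \<bullet> b) \<le> m1 * (b \<bullet> b)"
      by (intro mult_right_mono) (auto simp: k_def)
    moreover have "m1 * (b \<bullet> b) \<le> b \<bullet> (blockdiag (\<lambda>i. Mi i (blk x i)) *v b)"
      by (intro blockdiag_quadratic_ge M_lower)
    ultimately show ?thesis
      unfolding S_fun_def ring_distribs(1)[of "k / 2"] by linarith
  qed
  ultimately show ?thesis by blast
qed

lemma storage_dissipation_rate:
  assumes Pi_pd: "\<And>i. sym_pos_def (Pim i)" and K_pd: "\<And>i. sym_pos_def (K i)" and Kz_pd: "sym_pos_def Kz"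
    and M_sym: "\<And>i x. transpose (Mi i x) = Mi i x"
    and M_upper: "\<And>i x w. w \<bullet> (Mi i x *v w) \<le> m2 * (w \<bullet> w)"
  shows "- (a \<bullet> ((blockdiag Pim ** blockdiag Pim) *v a)) - b \<bullet> (blockdiag K *v b)
      - (z - zd) \<bullet> ((Kz ** Kz) *v (z - zd))
    \<le> - (dissipation_gain Pim K Kz / storage_gain Pim Mi Kz)
        * S_fun (blockdiag Pim) (blockdiag (\<lambda>i. Mi i (blk x i))) Kz zd a b z"
proof -
  let ?k2 = "storage_gain Pim Mi Kz" and ?k3 = "dissipation_gain Pim K Kz"
    and ?N = "a \<bullet> a + b \<bullet> b + (z - zd) \<bullet> (z - zd)"
  have k2: "0 < ?k2" by (rule storage_gain_pos) (rule Pi_pd)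
  have k3: "0 < ?k3" by (rule dissipation_gain_pos) (rule Pi_pd K_pd Kz_pd)+
  have "?k3 / ?k2 * S_fun (blockdiag Pim) (blockdiag (\<lambda>i. Mi i (blk x i))) Kz zd a b z
      \<le> ?k3 / ?k2 * (?k2 / 2 * ?N)"
    using k2 k3 by (intro mult_left_mono S_fun_le_storage_gain[OF Pi_pd Kz_pd M_sym M_upper]) simp
  also have "\<dots> \<le> ?k3 * ?N" using k2 k3 by simp
  also have "\<dots> \<le> a \<bullet> ((blockdiag Pim ** blockdiag Pim) *v a) + b \<bullet> (blockdiag K *v b)
      + (z - zd) \<bullet> ((Kz ** Kz) *v (z - zd))"
    by (rule dissipation_gain_le[OF Pi_pd K_pd Kz_pd])
  finally show ?thesis by simp
qed

section \<open>Exponential decay\<close>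

lemma exp_decay_of_derivative_le:
  fixes S S' :: "real \<Rightarrow> real"
  assumes deriv: "\<And>t. 0 \<le> t \<Longrightarrow> (S has_real_derivative S' t) (at t within {0..})"
    and rate: "\<And>t. 0 \<le> t \<Longrightarrow> S' t \<le> - \<beta> * S t"
    and "0 \<le> t0" "t0 \<le> t"
  shows "S t \<le> exp (- \<beta> * (t - t0)) * S t0"
proof -
  define W where "W \<tau> = exp (\<beta> * \<tau>) * S \<tau>" for \<tau>
  have dW: "(W has_real_derivative exp (\<beta> * x) * (S' x + \<beta> * S x)) (at x within {0..})" if "0 \<le> x" for x
    unfolding W_def
    by (auto intro!: derivative_eq_intros deriv[OF that] simp: algebra_simps)
  have "continuous_on {0..} W"
    unfolding continuous_on_eq_continuous_within using dW[THEN DERIV_continuous] by simp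
  then have "W t \<le> W t0"
  proof (intro DERIV_nonpos_imp_decreasing_open[OF \<open>t0 \<le> t\<close>] exI conjI)
    fix x assume "t0 < x" "x < t"
    then have "0 < x" using \<open>0 \<le> t0\<close> by linarith
    then show "(W has_real_derivative exp (\<beta> * x) * (S' x + \<beta> * S x)) (at x)"
      using dW[of x] at_within_interior[of x "{0..}"] by simp
    show "exp (\<beta> * x) * (S' x + \<beta> * S x) \<le> 0"
      using rate[of x] \<open>0 < x\<close> by (simp add: mult_nonneg_nonpos)
  qed (rule continuous_on_subset, use \<open>0 \<le> t0\<close> in auto)
  have eq: "exp (- \<beta> * t) * W \<tau> = exp (- \<beta> * (t - \<tau>)) * S \<tau>" for \<tau>
    by (simp add: W_def mult.assoc[symmetric] mult_exp_exp right_diff_distrib)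
  have "S t = exp (- \<beta> * t) * W t" using eq[of t] by simp
  also have "\<dots> \<le> exp (- \<beta> * t) * W t0" using \<open>W t \<le> W t0\<close> by simp
  also have "\<dots> = exp (- \<beta> * (t - t0)) * S t0" by (rule eq)
  finally show ?thesis .
qed

lemma norm_exp_decay_of_quadratic_bounds:
  fixes x x0 :: "'a::real_normed_vector"
  assumes decay: "S \<le> exp (- \<beta> * (t - t0)) * S0"
    and lower: "k1 * (norm x)\<^sup>2 \<le> S" and upper: "S0 \<le> k2 * (norm x0)\<^sup>2"
    and "0 < k1" "0 \<le> k2"
  shows "norm x \<le> sqrt (k2 / k1) * exp (- (\<beta> / 2) * (t - t0)) * norm x0"
proof (rule power2_le_imp_le)
  have "k1 * (norm x)\<^sup>2 \<le> exp (- \<beta> * (t - t0)) * (k2 * (norm x0)\<^sup>2)"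
    using lower decay upper by (meson exp_ge_zero mult_left_mono order_trans)
  also have "\<dots> = k1 * (sqrt (k2 / k1) * exp (- (\<beta> / 2) * (t - t0)) * norm x0)\<^sup>2"
  proof -
    have "(exp (- (\<beta> / 2) * (t - t0)))\<^sup>2 = exp (- \<beta> * (t - t0))"
      by (simp add: power2_eq_square exp_add[symmetric])
    moreover have "(sqrt (k2 / k1))\<^sup>2 = k2 / k1" using \<open>0 < k1\<close> \<open>0 \<le> k2\<close> by simp
    ultimately show ?thesis using \<open>0 < k1\<close> by (simp add: power_mult_distrib)
  qed
  finally show "(norm x)\<^sup>2 \<le> (sqrt (k2 / k1) * exp (- (\<beta> / 2) * (t - t0)) * norm x0)\<^sup>2"
    using \<open>0 < k1\<close> by simp
  show "0 \<le> sqrt (k2 / k1) * exp (- (\<beta> / 2) * (t - t0)) * norm x0"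
    using \<open>0 < k1\<close> \<open>0 \<le> k2\<close> by simp
qed

lemma power2_norm_triple: "(norm (a, b, c))\<^sup>2 = a \<bullet> a + b \<bullet> b + c \<bullet> c"
  by (simp add: norm_Pair power2_norm_eq_inner add.assoc)

theorem mainTheorem1:
  fixes Mi :: "'N::finite \<Rightarrow> real^'n::finite \<Rightarrow> real^'n^'n"
    and DM :: "'N \<Rightarrow> real^'n \<Rightarrow> real^'n \<Rightarrow> real^'n^'n"
    and C :: "'N \<Rightarrow> real^'n \<Rightarrow> real^'n \<Rightarrow> real^'n^'n"
    and g :: "'N \<Rightarrow> real^'n \<Rightarrow> real^'n"
    and P :: "'N \<Rightarrow> real^'n \<Rightarrow> real"
    and Pim K :: "'N \<Rightarrow> real^'n^'n"
    and Kz :: "real^('M::finite \<times> 'n)^('M \<times> 'n)"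
    and zd :: "real^('M \<times> 'n)"
    and B :: "real^'M^'N"
    and qd qd' qd'' :: "real \<Rightarrow> real^'n"
    and m1 m2 :: real
  assumes M_sym: "\<And>i x. transpose (Mi i x) = Mi i x"
    and M_bounds: "0 < m1" "m1 \<le> m2"
    and M_lower: "\<And>i x w. m1 * (w \<bullet> w) \<le> w \<bullet> (Mi i x *v w)"
    and M_upper: "\<And>i x w. w \<bullet> (Mi i x *v w) \<le> m2 * (w \<bullet> w)"
    and M_deriv: "\<And>i x. (Mi i has_derivative DM i x) (at x)"
    and g_grad: "\<And>i x. (P i has_derivative (\<lambda>h. g i x \<bullet> h)) (at x)"
    and C_prop: "\<And>i x w. C i x w *v w =
          DM i x w *v w - (\<chi> j. (1/2) * (w \<bullet> (DM i x (axis j 1) *v w)))"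
    and C_skew: "\<And>i x w. transpose (DM i x w - 2 *\<^sub>R C i x w) = - (DM i x w - 2 *\<^sub>R C i x w)"
    and B_inc: "incidence_matrix B"
    and qd_d1: "\<And>t. (qd has_vector_derivative qd' t) (at t)"
    and qd_d2: "\<And>t. (qd' has_vector_derivative qd'' t) (at t)"
    and Pi_pd: "\<And>i. sym_pos_def (Pim i)"
    and K_pd: "\<And>i. sym_pos_def (K i)"
    and Kz_pd: "sym_pos_def Kz"
  shows
   "let PiB = blockdiag Pim; KB = blockdiag K;
        MB = (\<lambda>x :: real^('N \<times> 'n). blockdiag (\<lambda>i. Mi i (blk x i)));
        k2 = max (lambda_max PiB) (max (Sup (range (\<lambda>x. lambda_max (MB x)))) (lambda_max Kz));
        k3 = min (lambda_min (PiB ** PiB)) (min (lambda_min KB) (lambda_min (Kz ** Kz)));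
        \<beta> = k3 / k2
    in (\<forall>q v z. closed_loop_sol Mi C g Pim K Kz zd B qd qd' qd'' q v z \<longrightarrow>
         (let qt = (\<lambda>t. q t - stk (\<lambda>i. qd t));
              s = (\<lambda>t. v t - vref Pim (qd t) (qd' t) (q t));
              S = (\<lambda>t. S_fun PiB (MB (q t)) Kz zd (qt t) (s t) (z t));
              Sdot = (\<lambda>t. - (qt t \<bullet> ((PiB ** PiB) *v qt t)) - s t \<bullet> (KB *v s t)
                          - (z t - zd) \<bullet> ((Kz ** Kz) *v (z t - zd)))
          in \<forall>t\<ge>0. (S has_real_derivative Sdot t) (at t within {0..}) \<and>
                   Sdot t \<le> - \<beta> * S t \<and>
                   S t \<le> exp (- \<beta> * t) * S 0))
     \<and> (\<exists>c>0. \<exists>r>0. \<forall>q v z. closed_loop_sol Mi C g Pim K Kz zd B qd qd' qd'' q v z \<longrightarrow>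
          (let X = (\<lambda>t. (q t - stk (\<lambda>i. qd t), v t - vref Pim (qd t) (qd' t) (q t), z t - zd))
           in \<forall>t0 t. 0 \<le> t0 \<and> t0 \<le> t \<longrightarrow> norm (X t) \<le> c * exp (- r * (t - t0)) * norm (X t0)))"
proof -
  have Pi_sym: "\<And>i. transpose (Pim i) = Pim i" and Kz_sym: "transpose Kz = Kz"
    using Pi_pd Kz_pd by (simp_all add: sym_pos_def_def)
  note deriv = closed_loop_storage_derivative[where Mi=Mi and DM=DM and C=C and Pim=Pim,
      OF M_sym M_deriv C_skew Pi_sym Kz_sym qd_d1 qd_d2]
  note rate = storage_dissipation_rate[where Pim=Pim and K=K and Mi=Mi, OF Pi_pd K_pd Kz_pd M_sym M_upper]
  obtain k1 where k1: "0 < k1" and lower: "\<And>x a b z. k1 * (a \<bullet> a + b \<bullet> b + (z - zd) \<bullet> (z - zd))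
      \<le> S_fun (blockdiag Pim) (blockdiag (\<lambda>i. Mi i (blk x i))) Kz zd a b z"
    using S_fun_quadratic_lower_bound[where Pim=Pim and Mi=Mi and zd=zd, OF Pi_pd Kz_pd M_lower M_bounds(1)] by blast
  note upper = S_fun_le_storage_gain[where Pim=Pim and Mi=Mi, OF Pi_pd Kz_pd M_sym M_upper]
  have k: "0 < storage_gain Pim Mi Kz" "0 < dissipation_gain Pim K Kz"
    by (rule storage_gain_pos dissipation_gain_pos Pi_pd K_pd Kz_pd)+
  show ?thesis
    unfolding Let_def storage_gain_def[symmetric] dissipation_gain_def[symmetric]
    apply (intro conjI allI impI)
    subgoal by (rule deriv)
    subgoal by (rule rate)
    subgoal premises p for q v z t
      using exp_decay_of_derivative_le[OF deriv[OF p(1)] rate, of 0 t] p(2) by simp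
    apply (rule exI[of _ "sqrt (storage_gain Pim Mi Kz / 2 / k1)"], rule conjI, simp add: k1 k)
    apply (rule exI[of _ "dissipation_gain Pim K Kz / storage_gain Pim Mi Kz / 2"], rule conjI, simp add: k)
    apply (intro allI impI)
    subgoal premises p for q v z t0 t
    proof (rule norm_exp_decay_of_quadratic_bounds)
      let ?S = "\<lambda>t. S_fun (blockdiag Pim) (blockdiag (\<lambda>i. Mi i (blk (q t) i))) Kz zd
        (q t - stk (\<lambda>i. qd t)) (v t - vref Pim (qd t) (qd' t) (q t)) (z t)"
      show "?S t \<le> exp (- (dissipation_gain Pim K Kz / storage_gain Pim Mi Kz) * (t - t0)) * ?S t0"
        using exp_decay_of_derivative_le[OF deriv[OF p(1)] rate] p(2) by blast
      show "k1 * (norm (q t - stk (\<lambda>i. qd t), v t - vref Pim (qd t) (qd' t) (q t), z t - zd))\<^sup>2 \<le> ?S t"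
        using lower by (simp add: power2_norm_triple)
    qed (use upper k1 k in \<open>simp_all add: power2_norm_triple\<close>)
    done
qed

end
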